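(* Let $N\ge 2$, $\mathcal{A}=\{1,\dots,N\}$, let $\boldsymbol{\lambda}\in\mathbb{R}_+^N$, $\boldsymbol{\delta}\in\mathbb{R}^N$ with $\delta_i>0$ for all $i$, and let $B=[b_{i,j}]\in\mathbb{R}_+^{N\times N}$ with zero diagonal, such that the directed graph $\mathcal{G}$ on $\mathcal{A}$ with an edge $(j,i)$ iff $b_{i,j}>0$ is weakly connected but not strongly connected. Let $\mathcal{S}\subset\mathbb{R}_+^N$ be convex and, for each $i$, let $q_i:\mathbb{R}_+\to(0,1]$ be decreasing, strictly convex and continuously differentiable; write $\mathbf{q}(\mathbf{s})=(q_i(s_i))_{i\in\mathcal{A}}$. Then for every fixed $\mathbf{s}\in\mathcal{S}$, the system $$\dot{\mathbf{p}}(t)=(\mathbf{1}-\mathbf{p}(t))\circ\mathbf{q}(\mathbf{s})\circ\big(\boldsymbol{\lambda}+B\mathbf{p}(t)\big)-\boldsymbol{\delta}\circ\mathbf{p}(t),\qquad \mathbf{p}(0)\in[0,1]^N,$$ has a unique stable equilibrium $\bar{\mathbf{p}}(\mathbf{s})$, and it satisfies $$(\mathbf{1}-\mathbf{p})\circ(\boldsymbol{\lambda}+B\mathbf{p})-\mathbf{q}(\mathbf{s})^{-1}\circ\boldsymbol{\delta}\circ\mathbf{p}=\mathbf{0}.$$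
   Context: $\circ$ denotes the element-wise product, and $\mathbf{q}(\mathbf{s})^{-1}=(q_i(s_i)^{-1})_{i}$ denotes the element-wise inverse. In the model, $\lambda_i>0$ for $i$ in a nonempty proper subset $\mathcal{A}_p\subsetneq\mathcal{A}$ and $\lambda_i=0$ otherwise; $b_{i,j}=\beta_{j,i}$ is the rate at which infection of system $j$ infects system $i$; $p_i(t)$ is the probability that system $i$ is infected at time $t$. *)

theory Defs
  imports "HOL-Analysis.Analysis"
begin

definition strictly_convex_on :: "real set \<Rightarrow> (real \<Rightarrow> real) \<Rightarrow> bool" where
  "strictly_convex_on A f \<longleftrightarrow> convex A \<and>
     (\<forall>x\<in>A. \<forall>y\<in>A. \<forall>u::real. x \<noteq> y \<and> 0 < u \<and> u < 1 \<longrightarrow>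
        f (u * x + (1 - u) * y) < u * f x + (1 - u) * f y)"

definition unit_cube :: "(real ^ 'n) set" where
  "unit_cube = {p. \<forall>i. 0 \<le> p $ i \<and> p $ i \<le> 1}"

definition sis_field ::
  "(real ^ 'n) \<Rightarrow> (real ^ 'n ^ 'n) \<Rightarrow> (real ^ 'n) \<Rightarrow> ('n \<Rightarrow> real \<Rightarrow> real) \<Rightarrow> (real ^ 'n)
     \<Rightarrow> (real ^ 'n) \<Rightarrow> (real ^ 'n)" where
  "sis_field lam B del q s p =
     (\<chi> i. (1 - p $ i) * q i (s $ i) * (lam $ i + (B *v p) $ i) - del $ i * p $ i)"

definition ode_solution :: "('a::real_normed_vector \<Rightarrow> 'a) \<Rightarrow> (real \<Rightarrow> 'a) \<Rightarrow> bool" where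
  "ode_solution F x \<longleftrightarrow> (\<forall>t\<ge>0. (x has_vector_derivative F (x t)) (at t within {0..}))"

definition equilibrium :: "('a::real_normed_vector \<Rightarrow> 'a) \<Rightarrow> 'a set \<Rightarrow> 'a \<Rightarrow> bool" where
  "equilibrium F X p \<longleftrightarrow> p \<in> X \<and> F p = 0"

definition lyapunov_stable :: "('a::real_normed_vector \<Rightarrow> 'a) \<Rightarrow> 'a set \<Rightarrow> 'a \<Rightarrow> bool" where
  "lyapunov_stable F X p \<longleftrightarrow>
     (\<forall>e>0. \<exists>d>0. \<forall>x. ode_solution F x \<and> x 0 \<in> X \<and> dist (x 0) p < d \<longrightarrow>
        (\<forall>t\<ge>0. dist (x t) p < e))"

definition attractive :: "('a::real_normed_vector \<Rightarrow> 'a) \<Rightarrow> 'a set \<Rightarrow> 'a \<Rightarrow> bool" where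
  "attractive F X p \<longleftrightarrow>
     (\<exists>d>0. \<forall>x. ode_solution F x \<and> x 0 \<in> X \<and> dist (x 0) p < d \<longrightarrow> (x \<longlongrightarrow> p) at_top)"

text \<open>Stable equilibrium = (locally) asymptotically stable equilibrium, relative to the state space X.\<close>
definition stable_equilibrium :: "('a::real_normed_vector \<Rightarrow> 'a) \<Rightarrow> 'a set \<Rightarrow> 'a \<Rightarrow> bool" where
  "stable_equilibrium F X p \<longleftrightarrow> equilibrium F X p \<and> lyapunov_stable F X p \<and> attractive F X p"

definition infection_edges :: "real ^ 'n ^ 'n \<Rightarrow> ('n \<times> 'n) set" where
  "infection_edges B = {(j, i). B $ i $ j > 0}"

definition weakly_connected :: "('n \<times> 'n) set \<Rightarrow> bool" where
  "weakly_connected E \<longleftrightarrow> (\<forall>u v. (u, v) \<in> (E \<union> E\<inverse>)\<^sup>*)"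

definition strongly_connected :: "('n \<times> 'n) set \<Rightarrow> bool" where
  "strongly_connected E \<longleftrightarrow> (\<forall>u v. (u, v) \<in> E\<^sup>*)"

end

theory Submission
  imports Defs
begin

(* The field F p = (1 - p) o q(s) o (lam + B p) - del o p is cooperative on the cube [0,1]^N
   (its off-diagonal partial derivatives are nonnegative), so its flow preserves the componentwise
   order; the flow is built by a monotone Picard iteration for p' + k p = F p + k p with k large.
   Hence the trajectory from 1 decreases to the largest equilibrium pbar, and trajectories from
   points a with F a >= 0 increase. F is subhomogeneous on the cube, F (b p) >= b F p for
   0 <= b <= 1, strictly at the positive components of an equilibrium p if b < 1, so no other
   equilibrium lies between b pbar and pbar. Trapping trajectories near pbar between those from (1 - eta) pbar and from 1
   gives asymptotic stability. Every other equilibrium p lies below pbar, and F >= 0 on the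
   segment from p to pbar. *)

section \<open>Order, limits and derivatives in \<open>real^'n\<close>\<close>

lemma has_real_derivative_vec_nth:
  fixes x :: "real \<Rightarrow> real^'n"
  assumes "(x has_vector_derivative v) F"
  shows "((\<lambda>t. x t $ i) has_real_derivative v $ i) F"
proof -
  have "((\<lambda>t. x t $ i) has_derivative (\<lambda>h. (h *\<^sub>R v) $ i)) F"
    using bounded_linear.has_derivative[OF bounded_linear_vec_nth assms[unfolded has_vector_derivative_def]] .
  moreover have "(\<lambda>h. (h *\<^sub>R v) $ i) = (*) (v $ i)" by (auto simp: fun_eq_iff)
  ultimately show ?thesis by (simp add: has_field_derivative_def)
qed

lemma has_vector_derivative_vec_lambda:
  fixes x :: "real \<Rightarrow> real^'n"
  assumes "\<And>i. ((\<lambda>t. x t $ i) has_real_derivative v $ i) (at t within S)"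
  shows "(x has_vector_derivative v) (at t within S)"
  unfolding has_vector_derivative_def
proof (subst has_derivative_componentwise_within, intro ballI)
  fix b :: "real^'n" assume "b \<in> Basis"
  then obtain i where b: "b = axis i 1" unfolding Basis_vec_def by auto
  have "((\<lambda>t. x t $ i) has_derivative (\<lambda>h. v $ i * h)) (at t within S)"
    using assms[of i] unfolding has_field_derivative_def by simp
  then show "((\<lambda>t. x t \<bullet> b) has_derivative (\<lambda>h. h *\<^sub>R v \<bullet> b)) (at t within S)"
    unfolding b by (simp add: cart_eq_inner_axis[symmetric] mult.commute)
qed

lemma tendsto_vec_lowerbound:
  fixes x :: "'a \<Rightarrow> real^'n"
  assumes "(x \<longlongrightarrow> l) F" "eventually (\<lambda>t. a \<le> x t) F" "F \<noteq> bot"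
  shows "a \<le> l"
  unfolding less_eq_vec_def
  by (intro allI Lim_component_ge_cart[OF assms(1)])
    (use assms(2,3) in \<open>auto simp: less_eq_vec_def elim: eventually_mono\<close>)

lemma vec_tendsto_sandwich:
  fixes x l u :: "real \<Rightarrow> real^'n"
  assumes "eventually (\<lambda>t. l t \<le> x t \<and> x t \<le> u t) at_top"
    and "(l \<longlongrightarrow> p) at_top" and "(u \<longlongrightarrow> p) at_top"
  shows "(x \<longlongrightarrow> p) at_top"
proof (rule vec_tendstoI)
  fix i
  show "((\<lambda>t. x t $ i) \<longlongrightarrow> p $ i) at_top"
    by (rule tendsto_sandwich[of "\<lambda>t. l t $ i" _ _ "\<lambda>t. u t $ i"])
      (use assms in \<open>auto simp: less_eq_vec_def elim: eventually_mono intro: tendsto_vec_nth\<close>)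
qed

lemma antimono_bounded_convergent:
  fixes f :: "real \<Rightarrow> real"
  assumes anti: "\<And>s t. 0 \<le> s \<Longrightarrow> s \<le> t \<Longrightarrow> f t \<le> f s" and bdd: "\<And>t. 0 \<le> t \<Longrightarrow> m \<le> f t"
  shows "\<exists>l. (f \<longlongrightarrow> l) at_top"
proof
  let ?l = "Inf (f ` {0..})"
  have bb: "bdd_below (f ` {0..})" using bdd by (auto intro!: bdd_belowI[of _ m])
  show "(f \<longlongrightarrow> ?l) at_top"
  proof (rule order_tendstoI)
    fix y assume "y < ?l"
    moreover have "?l \<le> f t" if "0 \<le> t" for t using bb that by (auto intro: cInf_lower)
    ultimately show "eventually (\<lambda>t. y < f t) at_top"
      unfolding eventually_at_top_linorder by (meson less_le_trans)
  next
    fix y assume "?l < y"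
    then obtain T where "0 \<le> T" "f T < y" using cInf_less_iff[OF _ bb] by auto
    then show "eventually (\<lambda>t. f t < y) at_top"
      unfolding eventually_at_top_linorder by (meson anti le_less_trans)
  qed
qed

lemma vec_antimono_bounded_convergent:
  fixes x :: "real \<Rightarrow> real^'n"
  assumes "\<And>s t. 0 \<le> s \<Longrightarrow> s \<le> t \<Longrightarrow> x t \<le> x s" and "\<And>t. 0 \<le> t \<Longrightarrow> a \<le> x t"
  shows "\<exists>l. (x \<longlongrightarrow> l) at_top"
proof -
  have "\<exists>l. ((\<lambda>t. x t $ i) \<longlongrightarrow> l) at_top" for i
    by (rule antimono_bounded_convergent[of _ "a $ i"]) (use assms in \<open>auto simp: less_eq_vec_def\<close>)
  then obtain l where "\<And>i. ((\<lambda>t. x t $ i) \<longlongrightarrow> l i) at_top" by metis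
  then have "(x \<longlongrightarrow> (\<chi> i. l i)) at_top" by (intro vec_tendstoI) simp
  then show ?thesis ..
qed

lemma vec_mono_bounded_convergent:
  fixes x :: "real \<Rightarrow> real^'n"
  assumes "\<And>s t. 0 \<le> s \<Longrightarrow> s \<le> t \<Longrightarrow> x s \<le> x t" and "\<And>t. 0 \<le> t \<Longrightarrow> x t \<le> b"
  shows "\<exists>l. (x \<longlongrightarrow> l) at_top"
proof -
  obtain l where "((\<lambda>t. - x t) \<longlongrightarrow> l) at_top"
    using vec_antimono_bounded_convergent[of "\<lambda>t. - x t" "- b"] assms
    by (auto simp: less_eq_vec_def)
  then have "(x \<longlongrightarrow> - l) at_top" using tendsto_minus by fastforce
  then show ?thesis ..
qed

lemma norm_le_card_mult_cart:
  fixes v :: "real^'n" and c :: real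
  assumes "\<And>i. \<bar>v $ i\<bar> \<le> c"
  shows "norm v \<le> CARD('n) * c"
proof -
  have "norm v \<le> (\<Sum>i\<in>UNIV. \<bar>v $ i\<bar>)" by (rule norm_le_l1_cart)
  also have "\<dots> \<le> CARD('n) * c"
    using sum_bounded_above[of UNIV "\<lambda>i. \<bar>v $ i\<bar>" c] assms by simp
  finally show ?thesis .
qed

lemma shrunk_le_nearby:
  fixes p :: "real^'n"
  assumes p: "\<And>i. 0 \<le> p $ i" and \<eta>: "0 < \<eta>"
  obtains d where "0 < d" "\<And>x. (\<And>i. 0 \<le> x $ i) \<Longrightarrow> dist x p < d \<Longrightarrow> (1 - \<eta>) *\<^sub>R p \<le> x"
proof
  define m where "m = Min (insert 1 ((\<lambda>i. p $ i) ` {i. 0 < p $ i}))"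
  have fin: "finite (insert 1 ((\<lambda>i. p $ i) ` {i. 0 < p $ i}))" by simp
  have m: "0 < m" "\<And>i. 0 < p $ i \<Longrightarrow> m \<le> p $ i"
    unfolding m_def using fin by (auto simp: Min_gr_iff intro: Min_le)
  show "0 < \<eta> * m" using \<eta> m by simp
  fix x :: "real^'n"
  assume x: "\<And>i. 0 \<le> x $ i" and d: "dist x p < \<eta> * m"
  show "(1 - \<eta>) *\<^sub>R p \<le> x"
    unfolding less_eq_vec_def
  proof
    fix i
    show "((1 - \<eta>) *\<^sub>R p) $ i \<le> x $ i"
    proof (cases "0 < p $ i")
      case True
      have "p $ i - x $ i \<le> dist x p"
        using component_le_norm_cart[of "p - x" i] by (simp add: dist_norm norm_minus_commute)
      also have "\<dots> < \<eta> * m" by (rule d)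
      also have "\<dots> \<le> \<eta> * p $ i" using m(2)[OF True] \<eta> by simp
      finally show ?thesis by (simp add: algebra_simps)
    next
      case False
      then show ?thesis using p[of i] x[of i] by simp
    qed
  qed
qed

lemma closed_unit_cube: "closed (unit_cube :: (real^'n) set)"
  unfolding unit_cube_def
  by (intro closed_Collect_all closed_Collect_conj closed_Collect_le continuous_intros)

lemma unit_cube_iff: "p \<in> unit_cube \<longleftrightarrow> 0 \<le> p \<and> p \<le> 1"
  by (auto simp: unit_cube_def less_eq_vec_def)

lemma one_in_unit_cube: "(1 :: real^'n) \<in> unit_cube"
  by (simp add: unit_cube_def)

lemma integral_exp_mult:
  fixes k t :: real
  assumes "0 < k" "0 \<le> t"
  shows "integral {0..t} (\<lambda>r. exp (k * r)) = (exp (k * t) - 1) / k"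
proof -
  have "((\<lambda>r. exp (k * r)) has_integral (exp (k * t) / k - exp (k * 0) / k)) {0..t}"
    using assms
    by (intro fundamental_theorem_of_calculus)
      (auto intro!: derivative_eq_intros simp: has_real_derivative_iff_has_vector_derivative[symmetric])
  then show ?thesis by (simp add: integral_unique diff_divide_distrib)
qed

section \<open>Solutions of autonomous ODEs\<close>

lemma ode_solution_has_vector_derivative_Icc:
  "ode_solution F x \<Longrightarrow> t \<in> {0..T} \<Longrightarrow> (x has_vector_derivative F (x t)) (at t within {0..T})"
  unfolding ode_solution_def by (auto intro: has_vector_derivative_within_subset[of _ _ _ "{0..}"])

lemma ode_solution_continuous_on: "ode_solution F x \<Longrightarrow> continuous_on {0..T} x"
  unfolding continuous_on_eq_continuous_within
  using ode_solution_has_vector_derivative_Icc has_vector_derivative_continuous by blast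

lemma ode_solution_const: "F e = 0 \<Longrightarrow> ode_solution F (\<lambda>_. e)"
  unfolding ode_solution_def by (auto intro: has_vector_derivative_const)

lemma ode_solution_shift:
  assumes x: "ode_solution F x" and h: "0 \<le> h"
  shows "ode_solution F (\<lambda>t. x (t + h))"
  unfolding ode_solution_def
proof (intro allI impI)
  fix t :: real assume t: "0 \<le> t"
  have "((\<lambda>t. t + h) has_vector_derivative 1) (at t within {0..})"
    by (auto intro!: derivative_eq_intros simp: has_real_derivative_iff_has_vector_derivative[symmetric])
  moreover have "(x has_vector_derivative F (x (t + h))) (at (t + h) within (\<lambda>t. t + h) ` {0..})"
    using x t h unfolding ode_solution_def by (auto intro: has_vector_derivative_within_subset[of _ _ _ "{0..}"])
  ultimately show "((\<lambda>t. x (t + h)) has_vector_derivative F (x (t + h))) (at t within {0..})"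
    using vector_diff_chain_within by (fastforce simp: o_def)
qed

text \<open>A crude Gronwall inequality: on an interval short compared to the Lipschitz constant the
  distance of two solutions can at most double, since it stays below its maximum \<open>M\<close> while growing
  at rate at most \<open>L M\<close>.\<close>

lemma lipschitz_ode_dist_le_double:
  fixes x y :: "real \<Rightarrow> 'a::real_normed_vector"
  assumes lip: "L-lipschitz_on X F" and ab: "a \<le> b" and short: "(b - a) * L \<le> 1/2"
    and dx: "\<And>t. t \<in> {a..b} \<Longrightarrow> (x has_vector_derivative F (x t)) (at t within {a..b})"
    and dy: "\<And>t. t \<in> {a..b} \<Longrightarrow> (y has_vector_derivative F (y t)) (at t within {a..b})"
    and X: "\<And>t. t \<in> {a..b} \<Longrightarrow> x t \<in> X \<and> y t \<in> X"
  shows "\<forall>t\<in>{a..b}. dist (x t) (y t) \<le> 2 * dist (x a) (y a)"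
proof -
  define w where "w t = x t - y t" for t
  have L: "0 \<le> L" using lip by (rule lipschitz_on_nonneg)
  have dw: "(w has_vector_derivative (F (x t) - F (y t))) (at t within {a..b})" if "t \<in> {a..b}" for t
    unfolding w_def using dx[OF that] dy[OF that] by (rule has_vector_derivative_diff)
  have "continuous_on {a..b} (\<lambda>t. norm (w t))"
    using dw has_vector_derivative_continuous continuous_on_eq_continuous_within
    by (blast intro: continuous_on_norm)
  then obtain m where m: "m \<in> {a..b}" "\<And>t. t \<in> {a..b} \<Longrightarrow> norm (w t) \<le> norm (w m)"
    using continuous_attains_sup[of "{a..b}" "\<lambda>t. norm (w t)"] ab by auto
  define M where "M = norm (w m)"
  have growth: "norm (F (x s) - F (y s)) \<le> L * M" if "s \<in> {a..b}" for s
  proof -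
    have "norm (F (x s) - F (y s)) \<le> L * norm (w s)"
      using lipschitz_onD[OF lip, of "x s" "y s"] X[OF that] by (simp add: w_def dist_norm)
    also have "\<dots> \<le> L * M" unfolding M_def using m(2)[OF that] L by (rule mult_left_mono)
    finally show ?thesis .
  qed
  have "norm (w t) \<le> norm (w a) + M / 2" if t: "t \<in> {a..b}" for t
  proof -
    have "norm (w t - w a) \<le> (L * M) * norm (t - a)"
    proof (rule differentiable_bound[where S="{a..t}" and f'="\<lambda>s h. h *\<^sub>R (F (x s) - F (y s))"])
      show "(w has_derivative (\<lambda>h. h *\<^sub>R (F (x s) - F (y s)))) (at s within {a..t})" if "s \<in> {a..t}" for s
        using has_vector_derivative_within_subset[OF dw, of s "{a..t}"] that t
        unfolding has_vector_derivative_def by auto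
      show "onorm (\<lambda>h. h *\<^sub>R (F (x s) - F (y s))) \<le> L * M" if "s \<in> {a..t}" for s
        using growth[of s] that t by (simp add: onorm_scaleR_left[OF bounded_linear_ident] onorm_id)
    qed (use t in auto)
    also have "\<dots> = M * ((t - a) * L)" using t by (simp add: algebra_simps)
    also have "\<dots> \<le> M * (1/2)"
    proof (intro mult_left_mono)
      show "(t - a) * L \<le> 1/2" using t L short by (smt (verit) atLeastAtMost_iff mult_right_mono)
    qed (simp add: M_def)
    finally show ?thesis using norm_triangle_ineq2[of "w t" "w a"] by simp
  qed
  then have "M \<le> 2 * norm (w a)" using m(1) unfolding M_def by fastforce
  then show ?thesis using m(2) unfolding M_def w_def dist_norm by (meson order_trans)
qed

lemma lipschitz_ode_dist_le:
  fixes x y :: "real \<Rightarrow> 'a::real_normed_vector"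
  assumes lip: "L-lipschitz_on X F" and L: "0 < L"
    and x: "ode_solution F x" and y: "ode_solution F y"
    and X: "\<And>t. t \<in> {0..T} \<Longrightarrow> x t \<in> X \<and> y t \<in> X" and t: "t \<in> {0..T}"
  shows "dist (x t) (y t) \<le> 2 ^ nat \<lceil>2 * L * T\<rceil> * dist (x 0) (y 0)"
proof -
  define h where "h = 1 / (2 * L)"
  have h: "0 < h" "h * L = 1/2" using L unfolding h_def by auto
  have "\<forall>t\<in>{0..min T (k * h)}. dist (x t) (y t) \<le> 2 ^ k * dist (x 0) (y 0)" for k :: nat
  proof (induction k)
    case 0 then show ?case by auto
  next
    case (Suc k)
    define a where "a = min T (k * h)"
    define b where "b = min T (Suc k * h)"
    have ab: "0 \<le> a" "a \<le> b" "b \<le> T" "b - a \<le> h"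
      using h t by (auto simp: a_def b_def min_def algebra_simps)
    have short: "(b - a) * L \<le> 1/2"
      using mult_right_mono[OF ab(4), of L] L h by simp
    have double: "\<forall>s\<in>{a..b}. dist (x s) (y s) \<le> 2 * dist (x a) (y a)"
      by (rule lipschitz_ode_dist_le_double[OF lip ab(2) short])
        (use ab X in \<open>auto intro!: ode_solution_has_vector_derivative_Icc x y
           intro: has_vector_derivative_within_subset[of _ _ _ "{0..T}"]\<close>)
    show ?case
    proof
      fix s assume s: "s \<in> {0..min T (Suc k * h)}"
      show "dist (x s) (y s) \<le> 2 ^ Suc k * dist (x 0) (y 0)"
      proof (cases "s \<le> a")
        case True
        then have "dist (x s) (y s) \<le> 2 ^ k * dist (x 0) (y 0)" using Suc s unfolding a_def by auto
        also have "\<dots> \<le> 2 ^ Suc k * dist (x 0) (y 0)" by (intro mult_right_mono) auto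
        finally show ?thesis .
      next
        case False
        then have "dist (x s) (y s) \<le> 2 * dist (x a) (y a)" using double s by (auto simp: b_def)
        also have "\<dots> \<le> 2 * (2 ^ k * dist (x 0) (y 0))" using Suc ab(1) by (auto simp: a_def)
        finally show ?thesis by simp
      qed
    qed
  qed
  moreover have "T \<le> nat \<lceil>2 * L * T\<rceil> * h"
  proof -
    have "T = 2 * L * T * h" using h by (simp add: algebra_simps)
    also have "\<dots> \<le> nat \<lceil>2 * L * T\<rceil> * h" using h by (intro mult_right_mono) linarith+
    finally show ?thesis .
  qed
  ultimately show ?thesis using t by auto
qed

lemma ode_solution_unique:
  assumes lip: "\<And>R. \<exists>L>0. L-lipschitz_on (cball 0 R) F"
    and x: "ode_solution F x" and y: "ode_solution F y" and xy: "x 0 = y 0" and t: "0 \<le> t"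
  shows "x t = y t"
proof -
  have "bounded ((x ` {0..t}) \<union> (y ` {0..t}))"
    unfolding bounded_Un by (intro conjI compact_imp_bounded compact_continuous_image
        ode_solution_continuous_on[OF x] ode_solution_continuous_on[OF y] compact_Icc)
  then obtain R where R: "\<And>s. s \<in> {0..t} \<Longrightarrow> x s \<in> cball 0 R \<and> y s \<in> cball 0 R"
    unfolding bounded_iff by (meson Un_iff image_eqI mem_cball_0)
  obtain L where "0 < L" "L-lipschitz_on (cball 0 R) F" using lip by blast
  then have "dist (x t) (y t) \<le> 2 ^ nat \<lceil>2 * L * t\<rceil> * dist (x 0) (y 0)"
    using t by (intro lipschitz_ode_dist_le[OF _ _ x y R]) auto
  then show ?thesis using xy by simp
qed

lemma ode_solution_tendsto_equilibrium:
  fixes F :: "real^'n \<Rightarrow> real^'n"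
  assumes F: "isCont F e" and x: "ode_solution F x" and lim: "(x \<longlongrightarrow> e) at_top"
  shows "F e = 0"
proof (rule ccontr)
  assume "F e \<noteq> 0"
  then obtain i where "F e $ i \<noteq> 0" by (auto simp: vec_eq_iff)
  define v where "v = \<bar>F e $ i\<bar>"
  have v: "0 < v" using \<open>F e $ i \<noteq> 0\<close> unfolding v_def by simp
  have "((\<lambda>t. F (x t) $ i) \<longlongrightarrow> F e $ i) at_top"
    by (intro tendsto_vec_nth isCont_tendsto_compose[OF F] lim)
  moreover have "((\<lambda>t. x t $ i) \<longlongrightarrow> e $ i) at_top" by (intro tendsto_vec_nth lim)
  ultimately have "eventually (\<lambda>t. dist (F (x t) $ i) (F e $ i) < v/2) at_top"
    "eventually (\<lambda>t. dist (x t $ i) (e $ i) < v/4) at_top"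
    using v tendstoD by (metis half_gt_zero, metis divide_pos_pos zero_less_numeral)
  then have "eventually (\<lambda>t. \<bar>F (x t) $ i - F e $ i\<bar> < v/2 \<and> \<bar>x t $ i - e $ i\<bar> < v/4) at_top"
    unfolding dist_real_def by (rule eventually_conj)
  then obtain T where T: "\<And>t. T \<le> t \<Longrightarrow> \<bar>F (x t) $ i - F e $ i\<bar> < v/2 \<and> \<bar>x t $ i - e $ i\<bar> < v/4"
    by (auto simp: eventually_at_top_linorder)
  define t where "t = max 1 T"
  have "DERIV (\<lambda>s. x s $ i) s :> F (x s) $ i" if "t \<le> s" for s
  proof -
    have "0 < s" using that unfolding t_def by linarith
    moreover have "((\<lambda>s. x s $ i) has_real_derivative F (x s) $ i) (at s within {0..})"
      using x \<open>0 < s\<close> unfolding ode_solution_def by (auto intro: has_real_derivative_vec_nth)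
    moreover have "at s within {0..} = at s within UNIV"
      by (rule at_within_nhd[where S="{0<..}"]) (use \<open>0 < s\<close> in auto)
    ultimately show ?thesis by simp
  qed
  then obtain z where z: "t < z" "z < t + 1" and mvt: "x (t + 1) $ i - x t $ i = F (x z) $ i"
    using MVT2[of t "t + 1" "\<lambda>s. x s $ i" "\<lambda>s. F (x s) $ i"] by auto
  have "T \<le> t" unfolding t_def by auto
  then have "\<bar>F (x z) $ i - F e $ i\<bar> < v/2" "\<bar>x (t + 1) $ i - e $ i\<bar> < v/4" "\<bar>x t $ i - e $ i\<bar> < v/4"
    using T[of z] T[of t] T[of "t + 1"] z by auto
  then show False using mvt unfolding v_def by arith
qed

section \<open>The SIS vector field\<close>

locale sis_model =
  fixes lam del :: "real^'n" and B :: "real^'n^'n" and q :: "'n \<Rightarrow> real \<Rightarrow> real" and s :: "real^'n"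
  assumes lam_nonneg: "\<And>i. 0 \<le> lam $ i" and del_pos: "\<And>i. 0 < del $ i"
    and B_nonneg: "\<And>i j. 0 \<le> B $ i $ j"
    and q_pos: "\<And>i. 0 < q i (s $ i)" and q_le_one: "\<And>i. q i (s $ i) \<le> 1"
begin

abbreviation F :: "real^'n \<Rightarrow> real^'n" where
  "F \<equiv> sis_field lam B del q s"

lemma F_nth: "F p $ i = (1 - p $ i) * q i (s $ i) * (lam $ i + (B *v p) $ i) - del $ i * p $ i"
  by (simp add: sis_field_def)

lemma isCont_F: "isCont F p"
  unfolding sis_field_def matrix_vector_mult_def
  by (intro continuous_on_interior[of UNIV] continuous_on_vec_lambda continuous_intros) auto

lemma matrix_vector_mult_nth: "(B *v p) $ i = (\<Sum>j\<in>UNIV. B $ i $ j * p $ j)"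
  by (simp add: matrix_vector_mult_def)

lemma matrix_vector_mult_nonneg: "0 \<le> p \<Longrightarrow> 0 \<le> (B *v p) $ i"
  unfolding matrix_vector_mult_nth less_eq_vec_def by (auto intro!: sum_nonneg mult_nonneg_nonneg B_nonneg)

lemma matrix_vector_mult_mono: "p \<le> p' \<Longrightarrow> (B *v p) $ i \<le> (B *v p') $ i"
  unfolding matrix_vector_mult_nth less_eq_vec_def by (auto intro!: sum_mono mult_left_mono B_nonneg)

lemma matrix_vector_mult_le_row_sum: "p \<in> unit_cube \<Longrightarrow> (B *v p) $ i \<le> (\<Sum>j\<in>UNIV. B $ i $ j)"
  unfolding matrix_vector_mult_nth unit_cube_def by (auto intro!: sum_mono mult_left_le B_nonneg)

lemma abs_matrix_vector_mult_le: "\<bar>(B *v v) $ i\<bar> \<le> (\<Sum>j\<in>UNIV. B $ i $ j) * norm v"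
proof -
  have "\<bar>(B *v v) $ i\<bar> \<le> (\<Sum>j\<in>UNIV. \<bar>B $ i $ j * v $ j\<bar>)" unfolding matrix_vector_mult_nth by (rule sum_abs)
  also have "\<dots> \<le> (\<Sum>j\<in>UNIV. B $ i $ j * norm v)"
    by (intro sum_mono) (simp add: abs_mult B_nonneg mult_left_mono component_le_norm_cart)
  finally show ?thesis by (simp add: sum_distrib_right)
qed

text \<open>Adding \<open>shift *\<^sub>R p\<close> to the cooperative field \<open>F\<close> makes it monotone on the cube:
  \<open>shift\<close> dominates the decay rate and the infection rate of every node.\<close>

definition shift :: real where
  "shift = 1 + (\<Sum>i\<in>UNIV. lam $ i + del $ i + (\<Sum>j\<in>UNIV. B $ i $ j))"

definition G :: "real^'n \<Rightarrow> real^'n" where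
  "G p = F p + shift *\<^sub>R p"

lemma row_data_le_shift: "lam $ i + del $ i + (\<Sum>j\<in>UNIV. B $ i $ j) \<le> shift - 1"
proof -
  have "lam $ i + del $ i + (\<Sum>j\<in>UNIV. B $ i $ j) \<le> (\<Sum>i\<in>UNIV. lam $ i + del $ i + (\<Sum>j\<in>UNIV. B $ i $ j))"
    by (rule member_le_sum)
      (auto intro!: add_nonneg_nonneg sum_nonneg lam_nonneg B_nonneg less_imp_le[OF del_pos])
  then show ?thesis unfolding shift_def by simp
qed

lemma shift_pos: "0 < shift"
  unfolding shift_def
  by (intro add_pos_nonneg zero_less_one sum_nonneg add_nonneg_nonneg lam_nonneg B_nonneg
      less_imp_le[OF del_pos])

lemma G_nth: "G p $ i = (1 - p $ i) * q i (s $ i) * (lam $ i + (B *v p) $ i) + (shift - del $ i) * p $ i"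
  by (simp add: G_def F_nth algebra_simps)

lemma isCont_G: "isCont G p"
  unfolding G_def by (intro continuous_intros isCont_F)

lemma G_mono:
  assumes p: "p \<in> unit_cube" and p': "p' \<in> unit_cube" and le: "p \<le> p'"
  shows "G p \<le> G p'"
  unfolding less_eq_vec_def
proof
  fix i
  let ?A = "lam $ i + (B *v p) $ i" and ?A' = "lam $ i + (B *v p') $ i" and ?c = "q i (s $ i)"
  have "?c * ?A \<le> ?A"
    using lam_nonneg[of i] matrix_vector_mult_nonneg[of p i] p q_pos[of i] q_le_one[of i]
    by (intro mult_left_le_one_le) (auto simp: unit_cube_iff)
  also have "\<dots> \<le> shift - del $ i" using matrix_vector_mult_le_row_sum[OF p, of i] row_data_le_shift[of i] by simp
  finally have "?c * ?A \<le> shift - del $ i" .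
  moreover have "?A \<le> ?A'" "p' $ i \<le> 1" "p $ i \<le> p' $ i"
    using matrix_vector_mult_mono[OF le, of i] p' le by (auto simp: unit_cube_def less_eq_vec_def)
  ultimately have "0 \<le> (1 - p' $ i) * ?c * (?A' - ?A) + (p' $ i - p $ i) * (shift - del $ i - ?c * ?A)"
    using q_pos[of i] by (intro add_nonneg_nonneg mult_nonneg_nonneg) auto
  also have "\<dots> = G p' $ i - G p $ i"
    unfolding G_nth by (simp add: algebra_simps)
  finally show "G p $ i \<le> G p' $ i" by simp
qed

lemma abs_F_nth_diff_le:
  assumes p: "norm p \<le> R" and p': "norm p' \<le> R"
  shows "\<bar>F p $ i - F p' $ i\<bar> \<le> shift * (1 + 2 * R) * norm (p - p')"
proof -
  define d where "d = norm (p - p')"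
  define \<beta> where "\<beta> = (\<Sum>j\<in>UNIV. B $ i $ j)"
  define X where "X = (1 - p $ i) * (B *v (p - p')) $ i + (p' $ i - p $ i) * (lam $ i + (B *v p') $ i)"
  have R: "0 \<le> R" using p norm_ge_zero order_trans by blast
  have \<beta>: "0 \<le> \<beta>" unfolding \<beta>_def by (auto intro: sum_nonneg B_nonneg)
  have d_comp: "\<bar>p' $ i - p $ i\<bar> \<le> d" "\<bar>p $ i - p' $ i\<bar> \<le> d"
    unfolding d_def using component_le_norm_cart[of "p - p'" i] by (auto simp: abs_minus_commute)
  have "\<bar>(B *v p') $ i\<bar> \<le> \<beta> * R"
    using abs_matrix_vector_mult_le[of p' i] mult_left_mono[OF p' \<beta>] unfolding \<beta>_def by linarith
  then have "\<bar>X\<bar> \<le> (1 + R) * (\<beta> * d) + d * (lam $ i + \<beta> * R)"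
    unfolding X_def abs_mult[symmetric]
    using abs_matrix_vector_mult_le[of "p - p'" i] component_le_norm_cart[of p i] p d_comp
      lam_nonneg[of i] \<beta> R
    by (intro order_trans[OF abs_triangle_ineq] add_mono)
      (auto simp: abs_mult \<beta>_def d_def intro!: mult_mono)
  moreover have "\<bar>q i (s $ i) * X\<bar> \<le> \<bar>X\<bar>"
    using q_pos[of i] q_le_one[of i] by (simp add: abs_mult mult_left_le_one_le)
  moreover have "\<bar>del $ i * (p $ i - p' $ i)\<bar> \<le> del $ i * d"
    using del_pos[of i] d_comp(2) by (simp add: abs_mult mult_left_mono)
  moreover have "F p $ i - F p' $ i = q i (s $ i) * X - del $ i * (p $ i - p' $ i)"
    unfolding F_nth X_def by (simp add: matrix_vector_mult_diff_distrib algebra_simps)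
  ultimately have "\<bar>F p $ i - F p' $ i\<bar> \<le> (1 + R) * (\<beta> * d) + d * (lam $ i + \<beta> * R) + del $ i * d"
    by linarith
  also have "\<dots> \<le> (lam $ i + del $ i + \<beta>) * (1 + 2 * R) * d"
    using R lam_nonneg[of i] del_pos[of i] by (simp add: algebra_simps d_def)
  also have "\<dots> \<le> shift * (1 + 2 * R) * d"
    using row_data_le_shift[of i] R unfolding \<beta>_def d_def by (intro mult_right_mono) auto
  finally show ?thesis unfolding d_def .
qed

lemma lipschitz_on_cball_F:
  assumes R: "0 \<le> R"
  shows "(CARD('n) * shift * (1 + 2 * R))-lipschitz_on (cball 0 R) F"
proof (rule lipschitz_onI)
  show "0 \<le> CARD('n) * shift * (1 + 2 * R)" using shift_pos R by simp
  fix p p' :: "real^'n" assume "p \<in> cball 0 R" "p' \<in> cball 0 R"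
  then have "norm (F p - F p') \<le> CARD('n) * (shift * (1 + 2 * R) * norm (p - p'))"
    by (intro norm_le_card_mult_cart) (auto simp: abs_F_nth_diff_le)
  then show "dist (F p) (F p') \<le> CARD('n) * shift * (1 + 2 * R) * dist p p'"
    by (simp add: dist_norm mult.assoc)
qed

lemma ex_lipschitz_on_cball_F: "\<exists>L>0. L-lipschitz_on (cball 0 R) F"
proof -
  have "(CARD('n) * shift * (1 + 2 * max 0 R))-lipschitz_on (cball 0 R) F"
    by (rule lipschitz_on_subset[OF lipschitz_on_cball_F]) auto
  moreover have "0 < CARD('n) * shift * (1 + 2 * max 0 R)" using shift_pos by simp
  ultimately show ?thesis by blast
qed

lemma ex_lipschitz_on_unit_cube_F: "\<exists>L>0. L-lipschitz_on unit_cube F"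
proof -
  have "unit_cube \<subseteq> cball (0::real^'n) CARD('n)"
    by (auto simp: unit_cube_def intro!: norm_le_card_mult_cart[where c=1, simplified])
  then show ?thesis using ex_lipschitz_on_cball_F lipschitz_on_subset by meson
qed

section \<open>Existence of solutions by monotone iteration\<close>

text \<open>Variation of constants for \<open>p' + shift *\<^sub>R p = G p\<close>: solutions of the ODE are the fixed
  points of \<open>picard x0\<close>, which is monotone in \<open>x\<close> because \<open>G\<close> is.\<close>

definition picard :: "real^'n \<Rightarrow> (real \<Rightarrow> real^'n) \<Rightarrow> real \<Rightarrow> real^'n" where
  "picard x0 x t = (\<chi> i. exp (- shift * t) * (x0 $ i + integral {0..t} (\<lambda>r. exp (shift * r) * G (x r) $ i)))"

lemma continuous_on_picard_integrand:
  "continuous_on {0..t} x \<Longrightarrow> continuous_on {0..t} (\<lambda>r. exp (shift * r) * G (x r) $ i)"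
  by (intro continuous_intros continuous_on_compose2[OF continuous_at_imp_continuous_on[OF ballI[OF isCont_G]]]) auto

lemma picard_0: "picard x0 x 0 = x0"
  unfolding picard_def by (simp add: vec_eq_iff)

lemma continuous_on_picard: "continuous_on {0..t} x \<Longrightarrow> continuous_on {0..t} (picard x0 x)"
  unfolding picard_def
  by (intro continuous_on_vec_lambda continuous_intros indefinite_integral_continuous_1
      integrable_continuous_real continuous_on_picard_integrand)

lemma picard_integral_eq:
  "integral {0..t} (\<lambda>r. exp (shift * r) * G (x r) $ i) = exp (shift * t) * picard x0 x t $ i - x0 $ i"
  by (simp add: picard_def mult.assoc[symmetric] exp_add[symmetric])

definition lower_barrier :: "real^'n \<Rightarrow> real^'n \<Rightarrow> bool" where
  "lower_barrier a x0 \<longleftrightarrow> a \<in> unit_cube \<and> 0 \<le> F a \<and> a \<le> x0 \<and> x0 \<in> unit_cube"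

lemma lower_barrier_0: "x0 \<in> unit_cube \<Longrightarrow> lower_barrier 0 x0"
  unfolding lower_barrier_def unit_cube_iff less_eq_vec_def
  using lam_nonneg q_pos by (simp add: F_nth) (meson less_imp_le mult_nonneg_nonneg)

lemma picard_in_unit_cube:
  assumes a: "lower_barrier a x0" and x: "continuous_on {0..t} x"
    and xa: "\<And>r. r \<in> {0..t} \<Longrightarrow> x r \<in> unit_cube \<and> a \<le> x r" and t: "0 \<le> t"
  shows "picard x0 x t \<in> unit_cube \<and> a \<le> picard x0 x t"
proof -
  have a0: "0 \<le> a" and ax0: "a \<le> x0" "x0 \<le> 1" and aF: "0 \<le> F a" and a1: "a \<in> unit_cube"
    using a by (auto simp: lower_barrier_def unit_cube_iff)
  have "a $ i \<le> picard x0 x t $ i \<and> picard x0 x t $ i \<le> 1" for i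
  proof -
    let ?I = "integral {0..t} (\<lambda>r. exp (shift * r) * G (x r) $ i)" and ?E = "exp (shift * t)"
    have int: "(\<lambda>r. exp (shift * r) * G (x r) $ i) integrable_on {0..t}"
      by (rule integrable_continuous_real[OF continuous_on_picard_integrand[OF x]])
    have int_const: "(\<lambda>r. exp (shift * r) * c) integrable_on {0..t}" for c
      by (intro integrable_continuous_real continuous_intros)
    have integral_const: "integral {0..t} (\<lambda>r. exp (shift * r) * c) = (?E - 1) / shift * c" for c
      using integral_exp_mult[OF shift_pos t] by (simp add: integral_mult_left)
    have bounds: "shift * a $ i \<le> G (x r) $ i \<and> G (x r) $ i \<le> shift" if "r \<in> {0..t}" for r
    proof -
      have "shift * a $ i \<le> G a $ i" using aF by (simp add: G_def less_eq_vec_def)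
      moreover have "G a \<le> G (x r)" "G (x r) \<le> G 1"
        using G_mono xa[OF that] a1 one_in_unit_cube by (auto simp: unit_cube_iff)
      moreover have "G 1 $ i \<le> shift" using del_pos[of i] by (simp add: G_def F_nth)
      ultimately show ?thesis by (auto simp: less_eq_vec_def dest!: spec[of _ i])
    qed
    have "integral {0..t} (\<lambda>r. exp (shift * r) * (shift * a $ i)) \<le> ?I"
      by (intro integral_le int_const int mult_left_mono) (auto simp: bounds)
    moreover have "?I \<le> integral {0..t} (\<lambda>r. exp (shift * r) * shift)"
      by (intro integral_le int_const int mult_left_mono) (auto simp: bounds)
    ultimately have "(?E - 1) * a $ i \<le> ?I" "?I \<le> ?E - 1"
      unfolding integral_const using shift_pos by auto
    moreover have "a $ i \<le> x0 $ i" "x0 $ i \<le> 1" using ax0 by (auto simp: less_eq_vec_def)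
    ultimately have "?E * a $ i \<le> x0 $ i + ?I" "x0 $ i + ?I \<le> ?E"
      by (auto simp: algebra_simps)
    then have "exp (- shift * t) * (?E * a $ i) \<le> exp (- shift * t) * (x0 $ i + ?I)"
      "exp (- shift * t) * (x0 $ i + ?I) \<le> exp (- shift * t) * ?E"
      by (auto intro: mult_left_mono)
    then show ?thesis
      by (simp add: picard_def mult.assoc[symmetric] exp_add[symmetric])
  qed
  then show ?thesis using a0 by (auto simp: unit_cube_iff less_eq_vec_def intro: order_trans)
qed

lemma picard_mono:
  assumes "x0 \<le> y0" and x: "continuous_on {0..t} x" and y: "continuous_on {0..t} y"
    and xy: "\<And>r. r \<in> {0..t} \<Longrightarrow> x r \<in> unit_cube \<and> y r \<in> unit_cube \<and> x r \<le> y r"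
  shows "picard x0 x t \<le> picard y0 y t"
  unfolding less_eq_vec_def
proof
  fix i
  have "integral {0..t} (\<lambda>r. exp (shift * r) * G (x r) $ i) \<le> integral {0..t} (\<lambda>r. exp (shift * r) * G (y r) $ i)"
    by (intro integral_le integrable_continuous_real continuous_on_picard_integrand x y mult_left_mono)
      (use xy G_mono in \<open>auto simp: less_eq_vec_def\<close>)
  then show "picard x0 x t $ i \<le> picard y0 y t $ i"
    unfolding picard_def using assms(1) by (auto simp: less_eq_vec_def intro!: mult_left_mono add_mono)
qed

primrec picard_iter :: "real^'n \<Rightarrow> real^'n \<Rightarrow> nat \<Rightarrow> real \<Rightarrow> real^'n" where
  "picard_iter a x0 0 = (\<lambda>t. a)"
| "picard_iter a x0 (Suc k) = picard x0 (picard_iter a x0 k)"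

lemma continuous_on_picard_iter: "continuous_on {0..t} (picard_iter a x0 k)"
  by (induction k arbitrary: t) (auto intro: continuous_on_picard)

lemma picard_iter_in_unit_cube:
  assumes a: "lower_barrier a x0" and t: "0 \<le> t"
  shows "picard_iter a x0 k t \<in> unit_cube \<and> a \<le> picard_iter a x0 k t"
  using t
proof (induction k arbitrary: t)
  case 0 then show ?case using a by (simp add: lower_barrier_def)
next
  case (Suc k)
  then show ?case using picard_in_unit_cube[OF a continuous_on_picard_iter] by simp
qed

lemma picard_iter_le_Suc:
  assumes a: "lower_barrier a x0" and t: "0 \<le> t"
  shows "picard_iter a x0 k t \<le> picard_iter a x0 (Suc k) t"
  using t
proof (induction k arbitrary: t)
  case 0 then show ?case using picard_in_unit_cube[OF a, where x="\<lambda>_. a"] a by (auto simp: lower_barrier_def)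
next
  case (Suc k)
  have "picard x0 (picard_iter a x0 k) t \<le> picard x0 (picard_iter a x0 (Suc k)) t"
    by (rule picard_mono)
      (use Suc picard_iter_in_unit_cube[OF a] in \<open>auto intro: continuous_on_picard_iter simp del: picard_iter.simps\<close>)
  then show ?case by simp
qed

definition picard_lim :: "real^'n \<Rightarrow> real^'n \<Rightarrow> real \<Rightarrow> real^'n" where
  "picard_lim a x0 t = (\<chi> i. SUP k. picard_iter a x0 k t $ i)"

lemma picard_iter_tendsto:
  assumes a: "lower_barrier a x0" and t: "0 \<le> t"
  shows "(\<lambda>k. picard_iter a x0 k t $ i) \<longlonglongrightarrow> picard_lim a x0 t $ i"
  unfolding picard_lim_def vec_lambda_beta
proof (rule LIMSEQ_incseq_SUP)
  show "bdd_above (range (\<lambda>k. picard_iter a x0 k t $ i))"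
    using picard_iter_in_unit_cube[OF a t] by (auto simp: unit_cube_def intro!: bdd_aboveI[of _ 1])
  show "incseq (\<lambda>k. picard_iter a x0 k t $ i)"
    using picard_iter_le_Suc[OF a t] by (auto intro!: incseq_SucI simp: less_eq_vec_def simp del: picard_iter.simps)
qed

lemma picard_lim_in_unit_cube:
  assumes a: "lower_barrier a x0" and t: "0 \<le> t"
  shows "picard_lim a x0 t \<in> unit_cube \<and> a \<le> picard_lim a x0 t"
proof -
  have "picard_iter a x0 k t \<in> unit_cube \<and> a \<le> picard_iter a x0 k t" for k
    by (rule picard_iter_in_unit_cube[OF a t])
  then have "a $ i \<le> picard_lim a x0 t $ i \<and> picard_lim a x0 t $ i \<le> 1" for i
    using picard_iter_tendsto[OF a t, of i]
    by (auto simp: unit_cube_def less_eq_vec_def intro: LIMSEQ_le_const LIMSEQ_le_const2)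
  moreover have "0 \<le> a" using a by (auto simp: lower_barrier_def unit_cube_iff)
  ultimately show ?thesis by (auto simp: unit_cube_def less_eq_vec_def intro: order_trans)
qed

lemma bounded_picard_iter_integrals:
  assumes a: "lower_barrier a x0" and t: "0 \<le> t"
  shows "bounded (range (\<lambda>k. integral {0..t} (\<lambda>r. exp (shift * r) * G (picard_iter a x0 k r) $ i)))"
  unfolding bounded_iff
proof (intro exI ballI)
  fix y assume "y \<in> range (\<lambda>k. integral {0..t} (\<lambda>r. exp (shift * r) * G (picard_iter a x0 k r) $ i))"
  then obtain k where "y = integral {0..t} (\<lambda>r. exp (shift * r) * G (picard_iter a x0 k r) $ i)"
    by auto
  then have y: "y = exp (shift * t) * picard_iter a x0 (Suc k) t $ i - x0 $ i"
    using picard_integral_eq[where x="picard_iter a x0 k"] by simp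
  have "0 \<le> picard_iter a x0 (Suc k) t $ i" "picard_iter a x0 (Suc k) t $ i \<le> 1" "0 \<le> x0 $ i" "x0 $ i \<le> 1"
    using picard_iter_in_unit_cube[OF a t, of "Suc k"] a
    by (auto simp: unit_cube_def lower_barrier_def simp del: picard_iter.simps)
  moreover from calculation
  have "0 \<le> exp (shift * t) * picard_iter a x0 (Suc k) t $ i"
    "exp (shift * t) * picard_iter a x0 (Suc k) t $ i \<le> exp (shift * t)"
    by (auto intro: mult_left_le simp del: picard_iter.simps)
  ultimately show "norm y \<le> exp (shift * t) + 1"
    unfolding y real_norm_def abs_le_iff by linarith
qed

text \<open>The fixed point property passes to the limit by monotone convergence of the integrals.\<close>

lemma picard_lim_fixed:
  assumes a: "lower_barrier a x0" and t: "0 \<le> t"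
  shows "picard_lim a x0 t $ i = picard x0 (picard_lim a x0) t $ i"
    and "(\<lambda>r. exp (shift * r) * G (picard_lim a x0 r) $ i) integrable_on {0..t}"
proof -
  define f where "f k r = exp (shift * r) * G (picard_iter a x0 k r) $ i" for k r
  define h where "h r = exp (shift * r) * G (picard_lim a x0 r) $ i" for r
  have f_int: "f k integrable_on {0..t}" for k
    unfolding f_def by (rule integrable_continuous_real[OF continuous_on_picard_integrand[OF continuous_on_picard_iter]])
  have f_mono: "f k r \<le> f (Suc k) r" if "r \<in> {0..t}" for k r
  proof -
    have "G (picard_iter a x0 k r) \<le> G (picard_iter a x0 (Suc k) r)"
      using that picard_iter_in_unit_cube[OF a] picard_iter_le_Suc[OF a]
      by (intro G_mono) (auto simp del: picard_iter.simps)
    then show ?thesis unfolding f_def by (auto simp: less_eq_vec_def)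
  qed
  have f_lim: "(\<lambda>k. f k r) \<longlonglongrightarrow> h r" if "r \<in> {0..t}" for r
  proof -
    have "(\<lambda>k. picard_iter a x0 k r) \<longlonglongrightarrow> picard_lim a x0 r"
      using picard_iter_tendsto[OF a] that by (intro vec_tendstoI) auto
    then show ?thesis
      unfolding f_def h_def by (intro tendsto_mult_left tendsto_vec_nth isCont_tendsto_compose[OF isCont_G])
  qed
  have "bounded (range (\<lambda>k. integral {0..t} (f k)))"
    unfolding f_def[abs_def] by (rule bounded_picard_iter_integrals[OF a t])
  then have h_int: "h integrable_on {0..t}"
    and conv: "(\<lambda>k. integral {0..t} (f k)) \<longlonglongrightarrow> integral {0..t} h"
    using monotone_convergence_increasing[OF f_int f_mono f_lim] by auto
  have "(\<lambda>k. picard_iter a x0 (Suc k) t $ i) = (\<lambda>k. exp (- shift * t) * (x0 $ i + integral {0..t} (f k)))"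
    by (simp add: picard_def f_def[abs_def] fun_eq_iff)
  then have "(\<lambda>k. picard_iter a x0 (Suc k) t $ i) \<longlonglongrightarrow> exp (- shift * t) * (x0 $ i + integral {0..t} h)"
    by (simp only:) (intro tendsto_intros conv)
  moreover have "(\<lambda>k. picard_iter a x0 (Suc k) t $ i) \<longlonglongrightarrow> picard_lim a x0 t $ i"
    using picard_iter_tendsto[OF a t] by (rule LIMSEQ_Suc)
  ultimately show "picard_lim a x0 t $ i = picard x0 (picard_lim a x0) t $ i"
    using LIMSEQ_unique unfolding picard_def h_def by fastforce
  show "(\<lambda>r. exp (shift * r) * G (picard_lim a x0 r) $ i) integrable_on {0..t}"
    using h_int unfolding h_def .
qed

lemma continuous_on_picard_lim:
  assumes a: "lower_barrier a x0"
  shows "continuous_on {0..T} (picard_lim a x0)"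
proof (cases "0 \<le> T")
  case True
  have "continuous_on {0..T} (picard x0 (picard_lim a x0))"
    unfolding picard_def
    by (intro continuous_on_vec_lambda continuous_intros indefinite_integral_continuous_1
        picard_lim_fixed(2)[OF a True])
  moreover have "picard_lim a x0 t = picard x0 (picard_lim a x0) t" if "t \<in> {0..T}" for t
    using picard_lim_fixed(1)[OF a] that by (auto simp: vec_eq_iff)
  ultimately show ?thesis using continuous_on_cong by (metis (no_types, lifting))
qed simp

lemma ode_solution_picard_lim:
  assumes a: "lower_barrier a x0"
  shows "ode_solution F (picard_lim a x0)"
  unfolding ode_solution_def
proof (intro allI impI)
  fix t :: real assume t: "0 \<le> t"
  have "at t within {0..t + 1} = at t within {0..}"
    by (rule at_within_nhd[where S="{..<t + 1}"]) auto
  moreover have "(picard_lim a x0 has_vector_derivative F (picard_lim a x0 t)) (at t within {0..t + 1})"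
  proof (rule has_vector_derivative_vec_lambda)
    fix i
    define h where "h r = exp (shift * r) * G (picard_lim a x0 r) $ i" for r
    have eq: "picard_lim a x0 u $ i = exp (- shift * u) * (x0 $ i + integral {0..u} h)" if "u \<in> {0..t + 1}" for u
      using picard_lim_fixed(1)[OF a, of u i] that unfolding picard_def h_def by simp
    have "((\<lambda>u. integral {0..u} h) has_real_derivative h t) (at t within {0..t + 1})"
      unfolding has_real_derivative_iff_has_vector_derivative h_def
      by (rule integral_has_vector_derivative[OF continuous_on_picard_integrand[OF continuous_on_picard_lim[OF a]]])
        (use t in auto)
    then have "((\<lambda>u. exp (- shift * u) * (x0 $ i + integral {0..u} h)) has_real_derivative
        (- shift * exp (- shift * t) * (x0 $ i + integral {0..t} h) + exp (- shift * t) * h t)) (at t within {0..t + 1})"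
      by (auto intro!: derivative_eq_intros)
    moreover have "- shift * exp (- shift * t) * (x0 $ i + integral {0..t} h) + exp (- shift * t) * h t
        = F (picard_lim a x0 t) $ i"
      using eq[of t] t by (simp add: h_def G_def mult.assoc[symmetric] exp_add[symmetric])
    ultimately show "((\<lambda>u. picard_lim a x0 u $ i) has_real_derivative F (picard_lim a x0 t) $ i) (at t within {0..t + 1})"
      using eq t by (auto intro: has_field_derivative_transform_within[where d=1])
  qed
  ultimately show "(picard_lim a x0 has_vector_derivative F (picard_lim a x0 t)) (at t within {0..})"
    by simp
qed

lemma picard_lim_0: "lower_barrier a x0 \<Longrightarrow> picard_lim a x0 0 = x0"
  using picard_lim_fixed(1)[of a x0 0] by (simp add: picard_0 vec_eq_iff)

section \<open>The order-preserving flow and the maximal equilibrium\<close>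

definition flow :: "real^'n \<Rightarrow> real \<Rightarrow> real^'n" where
  "flow x0 = picard_lim 0 x0"

lemma ode_solution_flow: "x0 \<in> unit_cube \<Longrightarrow> ode_solution F (flow x0)"
  unfolding flow_def by (intro ode_solution_picard_lim lower_barrier_0)

lemma flow_0: "x0 \<in> unit_cube \<Longrightarrow> flow x0 0 = x0"
  unfolding flow_def by (intro picard_lim_0 lower_barrier_0)

lemma flow_in_unit_cube: "x0 \<in> unit_cube \<Longrightarrow> 0 \<le> t \<Longrightarrow> flow x0 t \<in> unit_cube"
  unfolding flow_def using picard_lim_in_unit_cube lower_barrier_0 by blast

lemma ode_solution_eq_flow:
  "ode_solution F x \<Longrightarrow> x 0 \<in> unit_cube \<Longrightarrow> 0 \<le> t \<Longrightarrow> x t = flow (x 0) t"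
  by (rule ode_solution_unique[OF ex_lipschitz_on_cball_F _ ode_solution_flow]) (auto simp: flow_0)

lemma flow_equilibrium: "e \<in> unit_cube \<Longrightarrow> F e = 0 \<Longrightarrow> 0 \<le> t \<Longrightarrow> flow e t = e"
  using ode_solution_eq_flow[OF ode_solution_const] by fastforce

lemma flow_add: "x0 \<in> unit_cube \<Longrightarrow> 0 \<le> h \<Longrightarrow> 0 \<le> t \<Longrightarrow> flow x0 (t + h) = flow (flow x0 h) t"
  using ode_solution_eq_flow[OF ode_solution_shift[OF ode_solution_flow]] flow_in_unit_cube by simp

lemma flow_ge_lower_barrier:
  assumes a: "lower_barrier a x0" and t: "0 \<le> t"
  shows "a \<le> flow x0 t"
proof -
  have x0: "x0 \<in> unit_cube" using a by (simp add: lower_barrier_def)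
  have "picard_lim a x0 t = flow x0 t"
    using ode_solution_eq_flow[OF ode_solution_picard_lim[OF a]] picard_lim_0[OF a] x0 t by simp
  then show ?thesis using picard_lim_in_unit_cube[OF a t] by simp
qed

lemma flow_mono:
  assumes le: "x0 \<le> y0" and x0: "x0 \<in> unit_cube" and y0: "y0 \<in> unit_cube" and t: "0 \<le> t"
  shows "flow x0 t \<le> flow y0 t"
proof -
  have bx0: "lower_barrier 0 x0" and by0: "lower_barrier 0 y0" using lower_barrier_0 x0 y0 by auto
  have iter: "picard_iter 0 x0 k r \<le> picard_iter 0 y0 k r" if "0 \<le> r" for k r
    using that
  proof (induction k arbitrary: r)
    case (Suc k)
    have "picard x0 (picard_iter 0 x0 k) r \<le> picard y0 (picard_iter 0 y0 k) r"
      by (rule picard_mono[OF le continuous_on_picard_iter continuous_on_picard_iter])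
        (use picard_iter_in_unit_cube[OF bx0] picard_iter_in_unit_cube[OF by0] Suc.IH in auto)
    then show ?case by simp
  qed simp
  show ?thesis unfolding flow_def less_eq_vec_def
  proof
    fix i
    show "picard_lim 0 x0 t $ i \<le> picard_lim 0 y0 t $ i"
      by (rule LIMSEQ_le[OF picard_iter_tendsto[OF bx0 t] picard_iter_tendsto[OF by0 t]])
        (use iter[OF t] in \<open>auto simp: less_eq_vec_def simp del: picard_iter.simps\<close>)
  qed
qed

lemma flow_one_antimono:
  assumes "0 \<le> u" "u \<le> (t::real)"
  shows "flow 1 t \<le> flow 1 u"
proof -
  have "flow 1 (t - u) \<in> unit_cube" using assms by (intro flow_in_unit_cube one_in_unit_cube) simp
  then have "flow 1 t = flow (flow 1 (t - u)) u" and "flow 1 (t - u) \<le> 1"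
    using flow_add[OF one_in_unit_cube, of "t - u" u] assms by (auto simp: unit_cube_iff)
  then show ?thesis using flow_mono \<open>flow 1 (t - u) \<in> unit_cube\<close> one_in_unit_cube assms(1) by simp
qed

lemma flow_mono_of_sub_equilibrium:
  assumes a: "a \<in> unit_cube" "0 \<le> F a" and "0 \<le> u" "u \<le> (t::real)"
  shows "flow a u \<le> flow a t"
proof -
  have "a \<le> flow a (t - u)" using a assms(4) by (intro flow_ge_lower_barrier) (auto simp: lower_barrier_def)
  moreover have "flow a t = flow (flow a (t - u)) u"
    using flow_add[OF a(1), of "t - u" u] assms by simp
  ultimately show ?thesis using flow_mono flow_in_unit_cube a(1) assms by simp
qed

lemma flow_limit_equilibrium:
  assumes "x0 \<in> unit_cube" "(flow x0 \<longlongrightarrow> e) at_top"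
  shows "e \<in> unit_cube" "F e = 0"
  using Lim_in_closed_set[OF closed_unit_cube _ _ assms(2)] flow_in_unit_cube[OF assms(1)]
    ode_solution_tendsto_equilibrium[OF isCont_F ode_solution_flow[OF assms(1)] assms(2)]
  by (auto simp: eventually_at_top_linorder)

lemma flow_of_sub_equilibrium_tendsto:
  assumes a: "a \<in> unit_cube" "0 \<le> F a"
  obtains e where "(flow a \<longlongrightarrow> e) at_top" "e \<in> unit_cube" "F e = 0" "a \<le> e"
proof -
  obtain e where lim: "(flow a \<longlongrightarrow> e) at_top"
    using vec_mono_bounded_convergent[of "flow a" 1] flow_mono_of_sub_equilibrium[OF a]
      flow_in_unit_cube[OF a(1)] by (auto simp: unit_cube_iff)
  moreover have "a \<le> e"
  proof (rule tendsto_vec_lowerbound[OF lim])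
    show "eventually (\<lambda>t. a \<le> flow a t) at_top"
      using a by (auto simp: eventually_at_top_linorder lower_barrier_def intro!: exI[of _ 0] flow_ge_lower_barrier)
  qed simp
  ultimately show ?thesis using that flow_limit_equilibrium[OF a(1) lim] by blast
qed

definition pbar :: "real^'n" where
  "pbar = Lim at_top (flow 1)"

lemma flow_one_tendsto_pbar: "(flow 1 \<longlongrightarrow> pbar) at_top"
proof -
  obtain l where "(flow 1 \<longlongrightarrow> l) at_top"
    using vec_antimono_bounded_convergent[of "flow 1" 0] flow_one_antimono
      flow_in_unit_cube[OF one_in_unit_cube] by (auto simp: unit_cube_iff)
  then show ?thesis unfolding pbar_def by (simp add: tendsto_Lim)
qed

lemma pbar_in_unit_cube: "pbar \<in> unit_cube" and F_pbar: "F pbar = 0"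
  using flow_limit_equilibrium[OF one_in_unit_cube flow_one_tendsto_pbar] by auto

lemma equilibrium_le_pbar:
  assumes e: "e \<in> unit_cube" "F e = 0"
  shows "e \<le> pbar"
proof (rule tendsto_vec_lowerbound[OF flow_one_tendsto_pbar])
  have "e = flow e t" "flow e t \<le> flow 1 t" if "0 \<le> t" for t
    using flow_equilibrium[OF e that] flow_mono[OF _ e(1) one_in_unit_cube that] e(1)
    by (auto simp: unit_cube_iff)
  then show "eventually (\<lambda>t. e \<le> flow 1 t) at_top"
    by (auto simp: eventually_at_top_linorder)
qed simp

section \<open>Stability of the maximal equilibrium\<close>

lemma F_scaleR_nth:
  "F (\<alpha> *\<^sub>R p) $ i - \<alpha> * F p $ i
     = q i (s $ i) * ((1 - \<alpha>) * lam $ i + \<alpha> * (1 - \<alpha>) * p $ i * (B *v p) $ i)"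
  by (simp add: F_nth matrix_vector_mult_scaleR algebra_simps)

lemma F_scaleR_equilibrium_nonneg:
  assumes p: "p \<in> unit_cube" "F p = 0" and "0 \<le> \<alpha>" "\<alpha> \<le> 1"
  shows "0 \<le> F (\<alpha> *\<^sub>R p)"
  unfolding less_eq_vec_def
proof
  fix i
  have "0 \<le> q i (s $ i) * ((1 - \<alpha>) * lam $ i + \<alpha> * (1 - \<alpha>) * p $ i * (B *v p) $ i)"
    using q_pos[of i] lam_nonneg[of i] assms matrix_vector_mult_nonneg[of p i]
    by (intro mult_nonneg_nonneg add_nonneg_nonneg) (auto simp: unit_cube_iff less_eq_vec_def)
  then show "0 $ i \<le> F (\<alpha> *\<^sub>R p) $ i" using F_scaleR_nth[of \<alpha> p i] p(2) by simp
qed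

lemma F_scaleR_equilibrium_pos:
  assumes p: "p \<in> unit_cube" "F p = 0" and \<beta>: "0 < \<beta>" "\<beta> < 1" and pi: "0 < p $ i"
  shows "0 < F (\<beta> *\<^sub>R p) $ i"
proof -
  let ?A = "(B *v p) $ i"
  have A: "0 \<le> ?A" using p(1) by (intro matrix_vector_mult_nonneg) (simp add: unit_cube_iff)
  have "(1 - p $ i) * q i (s $ i) * (lam $ i + ?A) = del $ i * p $ i"
    using p(2) by (simp add: vec_eq_iff F_nth)
  then have "0 < (1 - p $ i) * q i (s $ i) * (lam $ i + ?A)" using del_pos[of i] pi by simp
  then have "0 < lam $ i + ?A" using lam_nonneg[of i] A by (auto simp: zero_less_mult_iff)
  then have "0 < (1 - \<beta>) * lam $ i + \<beta> * (1 - \<beta>) * p $ i * ?A"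
  proof (cases "0 < lam $ i")
    case True
    then show ?thesis using \<beta> pi A by (intro add_pos_nonneg) auto
  next
    case False
    then show ?thesis using \<beta> pi A lam_nonneg[of i] \<open>0 < lam $ i + ?A\<close> by (intro add_nonneg_pos) auto
  qed
  then show ?thesis using F_scaleR_nth[of \<beta> p i] p(2) q_pos[of i] by simp
qed

lemma F_nth_mono_off_diagonal:
  assumes "p \<le> p'" "p' $ i \<le> 1" "p $ i = p' $ i"
  shows "F p $ i \<le> F p' $ i"
  using assms q_pos[of i] matrix_vector_mult_mono[OF assms(1), of i]
  by (simp add: F_nth mult_left_mono)

lemma equilibrium_eq_if_scaleR_le:
  assumes p: "p \<in> unit_cube" "F p = 0" and e: "e \<in> unit_cube" "F e = 0"
    and \<alpha>: "0 < \<alpha>" "\<alpha> *\<^sub>R p \<le> e" and ep: "e \<le> p"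
  shows "e = p"
proof (rule ccontr)
  assume "e \<noteq> p"
  then obtain j where "e $ j \<noteq> p $ j" by (auto simp: vec_eq_iff)
  with ep have ej: "e $ j < p $ j" by (auto simp: less_eq_vec_def order.order_iff_strict)
  have e0: "\<And>k. 0 \<le> e $ k" and e1: "\<And>k. e $ k \<le> 1" and p0: "\<And>k. 0 \<le> p $ k"
    using e(1) p(1) by (auto simp: unit_cube_def)
  define P where "P = {k. 0 < p $ k}"
  define \<beta> where "\<beta> = Min ((\<lambda>k. e $ k / p $ k) ` P)"
  have jP: "j \<in> P" unfolding P_def using ej e0[of j] by simp
  then have "\<beta> \<in> (\<lambda>k. e $ k / p $ k) ` P" unfolding \<beta>_def by (intro Min_in) auto
  then obtain i where iP: "i \<in> P" and \<beta>i: "\<beta> = e $ i / p $ i" by blast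
  have \<beta>_le: "\<beta> \<le> e $ k / p $ k" if "k \<in> P" for k unfolding \<beta>_def using that by simp
  have "\<alpha> \<le> e $ k / p $ k" if "k \<in> P" for k
    using \<alpha>(2) that by (simp add: P_def less_eq_vec_def pos_le_divide_eq)
  then have "\<alpha> \<le> \<beta>" using iP \<beta>i by simp
  moreover have "e $ j / p $ j < 1" using ej jP by (simp add: P_def)
  then have "\<beta> < 1" using \<beta>_le[OF jP] by simp
  moreover have "\<beta> *\<^sub>R p \<le> e"
    unfolding less_eq_vec_def
  proof
    fix k
    show "(\<beta> *\<^sub>R p) $ k \<le> e $ k"
    proof (cases "k \<in> P")
      case True
      then show ?thesis using \<beta>_le[OF True] by (simp add: P_def pos_le_divide_eq)
    next
      case False
      then show ?thesis using p0[of k] e0[of k] by (simp add: P_def)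
    qed
  qed
  moreover have "(\<beta> *\<^sub>R p) $ i = e $ i" using \<beta>i iP by (simp add: P_def)
  ultimately have "0 < F (\<beta> *\<^sub>R p) $ i" "F (\<beta> *\<^sub>R p) $ i \<le> F e $ i"
    using F_scaleR_equilibrium_pos[OF p] F_nth_mono_off_diagonal[OF _ e1] \<alpha>(1) iP
    by (auto simp: P_def)
  then show False using e(2) by simp
qed

lemma F_segment_nth:
  "F (p + \<epsilon> *\<^sub>R (p' - p)) $ i = (1 - \<epsilon>) * F p $ i + \<epsilon> * F p' $ i
     + \<epsilon> * (1 - \<epsilon>) * q i (s $ i) * (p' $ i - p $ i) * (B *v (p' - p)) $ i"
  by (simp add: F_nth matrix_vector_right_distrib matrix_vector_mult_scaleR
      matrix_vector_mult_diff_distrib algebra_simps)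

lemma scaleR_pbar_in_unit_cube: "0 \<le> \<alpha> \<Longrightarrow> \<alpha> \<le> 1 \<Longrightarrow> \<alpha> *\<^sub>R pbar \<in> unit_cube"
  using pbar_in_unit_cube unfolding unit_cube_def by (simp add: mult_le_one)

lemma flow_between_shrunk_pbar_and_flow_one:
  assumes x0: "x0 \<in> unit_cube" and \<eta>: "0 \<le> \<eta>" "\<eta> \<le> 1" and le: "(1 - \<eta>) *\<^sub>R pbar \<le> x0" and t: "0 \<le> t"
  shows "(1 - \<eta>) *\<^sub>R pbar \<le> flow x0 t \<and> flow x0 t \<le> flow 1 t"
proof
  have "lower_barrier ((1 - \<eta>) *\<^sub>R pbar) x0"
    unfolding lower_barrier_def
    using scaleR_pbar_in_unit_cube F_scaleR_equilibrium_nonneg[OF pbar_in_unit_cube F_pbar] \<eta> le x0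
    by simp
  then show "(1 - \<eta>) *\<^sub>R pbar \<le> flow x0 t" using t by (rule flow_ge_lower_barrier)
  show "flow x0 t \<le> flow 1 t" using x0 one_in_unit_cube t by (intro flow_mono) (simp_all add: unit_cube_iff)
qed

lemma pbar_attractive: "attractive F unit_cube pbar"
proof -
  obtain d where d: "0 < d"
    and near: "\<And>x. (\<And>i. 0 \<le> x $ i) \<Longrightarrow> dist x pbar < d \<Longrightarrow> (1 - 1/2) *\<^sub>R pbar \<le> x"
    using shrunk_le_nearby[of pbar "1/2"] pbar_in_unit_cube unfolding unit_cube_def by auto
  define a where "a = (1/2 :: real) *\<^sub>R pbar"
  have a: "a \<in> unit_cube" "0 \<le> F a"
    unfolding a_def using scaleR_pbar_in_unit_cube F_scaleR_equilibrium_nonneg[OF pbar_in_unit_cube F_pbar]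
    by simp_all
  obtain e where e: "(flow a \<longlongrightarrow> e) at_top" "e \<in> unit_cube" "F e = 0" "a \<le> e"
    using flow_of_sub_equilibrium_tendsto[OF a] .
  have "e = pbar"
    using equilibrium_eq_if_scaleR_le[OF pbar_in_unit_cube F_pbar e(2,3), of "1/2"]
      equilibrium_le_pbar[OF e(2,3)] e(4)
    by (simp add: a_def)
  have "(x \<longlongrightarrow> pbar) at_top"
    if x: "ode_solution F x" "x 0 \<in> unit_cube" "dist (x 0) pbar < d" for x
  proof (rule vec_tendsto_sandwich)
    have "a \<le> x 0" using near[of "x 0"] x(2,3) unfolding a_def unit_cube_def by simp
    have "flow a t \<le> x t \<and> x t \<le> flow 1 t" if t: "0 \<le> t" for t
    proof -
      have "x t = flow (x 0) t" by (rule ode_solution_eq_flow[OF x(1,2) t])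
      moreover have "flow a t \<le> flow (x 0) t" by (rule flow_mono[OF \<open>a \<le> x 0\<close> a(1) x(2) t])
      moreover have "flow (x 0) t \<le> flow 1 t"
        using x(2) by (intro flow_mono[OF _ x(2) one_in_unit_cube t]) (simp add: unit_cube_iff)
      ultimately show ?thesis by simp
    qed
    then show "eventually (\<lambda>t. flow a t \<le> x t \<and> x t \<le> flow 1 t) at_top"
      by (intro eventually_at_top_linorderI[of 0])
    show "(flow a \<longlongrightarrow> pbar) at_top" using e(1) \<open>e = pbar\<close> by simp
  qed (rule flow_one_tendsto_pbar)
  then show ?thesis unfolding attractive_def using d by blast
qed

lemma flow_continuous_dependence:
  obtains K where "1 \<le> K"
    "\<And>x0 y0 t. x0 \<in> unit_cube \<Longrightarrow> y0 \<in> unit_cube \<Longrightarrow> t \<in> {0..T} \<Longrightarrow>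
       dist (flow x0 t) (flow y0 t) \<le> K * dist x0 y0"
proof -
  obtain L where L: "0 < L" "L-lipschitz_on unit_cube F" using ex_lipschitz_on_unit_cube_F by blast
  have "dist (flow x0 t) (flow y0 t) \<le> 2 ^ nat \<lceil>2 * L * T\<rceil> * dist x0 y0"
    if "x0 \<in> unit_cube" "y0 \<in> unit_cube" "t \<in> {0..T}" for x0 y0 t
    using lipschitz_ode_dist_le[OF L(2,1) ode_solution_flow ode_solution_flow, of x0 y0 T t]
      flow_in_unit_cube flow_0 that by auto
  then show ?thesis using that[of "2 ^ nat \<lceil>2 * L * T\<rceil>"] by simp
qed

lemma pbar_lyapunov_stable: "lyapunov_stable F unit_cube pbar"
  unfolding lyapunov_stable_def
proof (intro allI impI)
  fix \<epsilon> :: real assume "0 < \<epsilon>"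
  define N where "N = real CARD('n)"
  define \<eta> where "\<eta> = min 1 (\<epsilon> / (2 * N))"
  have \<eta>: "0 < \<eta>" "\<eta> \<le> 1" "N * \<eta> < \<epsilon>"
    using \<open>0 < \<epsilon>\<close> by (auto simp: \<eta>_def N_def min_def field_simps)
  obtain d1 where d1: "0 < d1" "\<And>x. (\<And>i. 0 \<le> x $ i) \<Longrightarrow> dist x pbar < d1 \<Longrightarrow> (1 - \<eta>) *\<^sub>R pbar \<le> x"
    using shrunk_le_nearby[of pbar \<eta>] pbar_in_unit_cube \<eta>(1) by (auto simp: unit_cube_def)
  obtain T where T: "0 \<le> T" "\<And>t. T \<le> t \<Longrightarrow> dist (flow 1 t) pbar < \<eta>"
    using tendstoD[OF flow_one_tendsto_pbar \<eta>(1)]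
    by (auto simp: eventually_at_top_linorder) (meson max.cobounded1 max.boundedE)
  obtain K where K: "1 \<le> K"
    "\<And>x0 y0 t. x0 \<in> unit_cube \<Longrightarrow> y0 \<in> unit_cube \<Longrightarrow> t \<in> {0..T} \<Longrightarrow>
       dist (flow x0 t) (flow y0 t) \<le> K * dist x0 y0"
    using flow_continuous_dependence[where T=T] by blast
  define d where "d = min d1 (\<epsilon> / K)"
  have "dist (x t) pbar < \<epsilon>"
    if x: "ode_solution F x" "x 0 \<in> unit_cube" "dist (x 0) pbar < d" and t: "0 \<le> t" for x t
  proof (cases "t \<le> T")
    case True
    have "dist (flow (x 0) t) (flow pbar t) \<le> K * dist (x 0) pbar"
      using K(2) x(2) pbar_in_unit_cube True t by simp
    also have "\<dots> < K * d" using x K by simp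
    also have "\<dots> \<le> \<epsilon>" using K by (simp add: d_def min_def field_simps split: if_splits)
    finally show ?thesis
      using ode_solution_eq_flow[OF x(1,2) t] flow_equilibrium[OF pbar_in_unit_cube F_pbar t] by simp
  next
    case False
    have "(1 - \<eta>) *\<^sub>R pbar \<le> x 0" using d1(2)[of "x 0"] x(2,3) by (auto simp: d_def unit_cube_def)
    then have le: "(1 - \<eta>) *\<^sub>R pbar \<le> x t \<and> x t \<le> flow 1 t"
      using flow_between_shrunk_pbar_and_flow_one[OF x(2) _ _ _ t, of \<eta>] \<eta> ode_solution_eq_flow[OF x(1,2) t]
      by simp
    have "\<bar>(x t - pbar) $ i\<bar> \<le> \<eta>" for i
    proof -
      have "\<bar>flow 1 t $ i - pbar $ i\<bar> < \<eta>"
        using T(2)[of t] False component_le_norm_cart[of "flow 1 t - pbar" i] by (simp add: dist_norm)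
      moreover have "\<eta> * pbar $ i \<le> \<eta>"
        using pbar_in_unit_cube \<eta> by (auto simp: unit_cube_def intro: mult_left_le)
      ultimately show ?thesis using le by (auto simp: less_eq_vec_def algebra_simps dest!: spec[of _ i])
    qed
    then have "dist (x t) pbar \<le> N * \<eta>" unfolding N_def dist_norm by (rule norm_le_card_mult_cart)
    then show ?thesis using \<eta>(3) by simp
  qed
  moreover have "0 < d" using d1(1) \<open>0 < \<epsilon>\<close> K by (simp add: d_def)
  ultimately show "\<exists>d>0. \<forall>x. ode_solution F x \<and> x 0 \<in> unit_cube \<and> dist (x 0) pbar < d \<longrightarrow>
      (\<forall>t\<ge>0. dist (x t) pbar < \<epsilon>)" by blast
qed

lemma segment_to_pbar_sub_equilibrium:
  assumes p: "p \<in> unit_cube" "F p = 0" and \<epsilon>: "0 \<le> \<epsilon>" "\<epsilon> \<le> 1"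
  shows "p + \<epsilon> *\<^sub>R (pbar - p) \<in> unit_cube" "0 \<le> F (p + \<epsilon> *\<^sub>R (pbar - p))"
proof -
  have comps: "0 \<le> p $ k" "p $ k \<le> pbar $ k" "pbar $ k \<le> 1" for k
    using p equilibrium_le_pbar[OF p] pbar_in_unit_cube by (auto simp: unit_cube_def less_eq_vec_def)
  show "p + \<epsilon> *\<^sub>R (pbar - p) \<in> unit_cube"
    unfolding unit_cube_def
  proof (intro CollectI allI conjI)
    fix k
    have "0 \<le> \<epsilon> * (pbar $ k - p $ k)" "\<epsilon> * (pbar $ k - p $ k) \<le> pbar $ k - p $ k"
      using comps[of k] \<epsilon> by (auto intro: mult_left_le_one_le)
    then show "0 \<le> (p + \<epsilon> *\<^sub>R (pbar - p)) $ k" "(p + \<epsilon> *\<^sub>R (pbar - p)) $ k \<le> 1"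
      using comps[of k] by auto
  qed
  show "0 \<le> F (p + \<epsilon> *\<^sub>R (pbar - p))"
    unfolding less_eq_vec_def
  proof
    fix i
    have "0 \<le> (B *v (pbar - p)) $ i" using comps by (intro matrix_vector_mult_nonneg) (simp add: less_eq_vec_def)
    then have "0 \<le> \<epsilon> * (1 - \<epsilon>) * q i (s $ i) * (pbar $ i - p $ i) * (B *v (pbar - p)) $ i"
      using \<epsilon> q_pos[of i] comps[of i] by (intro mult_nonneg_nonneg) auto
    then show "0 $ i \<le> F (p + \<epsilon> *\<^sub>R (pbar - p)) $ i"
      using F_segment_nth[of p \<epsilon> pbar i] p(2) F_pbar by simp
  qed
qed

text \<open>Arbitrarily close to any other equilibrium \<open>p\<close> there are sub-equilibria, whose trajectories
  increase and so stay away from \<open>p\<close>.\<close>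

lemma stable_equilibrium_eq_pbar:
  assumes st: "stable_equilibrium F unit_cube p"
  shows "p = pbar"
proof (rule ccontr)
  assume "p \<noteq> pbar"
  have p: "p \<in> unit_cube" "F p = 0" using st by (auto simp: stable_equilibrium_def equilibrium_def)
  obtain d where d: "0 < d"
    and att: "\<And>x. ode_solution F x \<and> x 0 \<in> unit_cube \<and> dist (x 0) p < d \<Longrightarrow> (x \<longlongrightarrow> p) at_top"
    using st unfolding stable_equilibrium_def attractive_def by blast
  define v where "v = pbar - p"
  have v: "0 < norm v" using \<open>p \<noteq> pbar\<close> by (simp add: v_def)
  define \<epsilon> where "\<epsilon> = min (1/2) (d / (2 * norm v))"
  have \<epsilon>: "0 < \<epsilon>" "\<epsilon> \<le> 1/2" "\<epsilon> * norm v < d"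
    using d v by (auto simp: \<epsilon>_def min_def field_simps)
  define x0 where "x0 = p + \<epsilon> *\<^sub>R v"
  have x0: "x0 \<in> unit_cube" "0 \<le> F x0"
    using segment_to_pbar_sub_equilibrium[OF p, of \<epsilon>] \<epsilon> by (simp_all add: x0_def v_def)
  then have "eventually (\<lambda>t. x0 \<le> flow x0 t) at_top"
    by (auto simp: eventually_at_top_linorder lower_barrier_def intro!: exI[of _ 0] flow_ge_lower_barrier)
  moreover have "(flow x0 \<longlongrightarrow> p) at_top"
    using x0 \<epsilon> by (intro att) (auto simp: ode_solution_flow flow_0 x0_def dist_norm)
  ultimately have "x0 \<le> p" by (intro tendsto_vec_lowerbound) auto
  then have "\<epsilon> * (pbar $ k - p $ k) \<le> 0" for k by (simp add: x0_def v_def less_eq_vec_def)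
  then have "pbar $ k \<le> p $ k" for k using \<epsilon>(1) by (simp add: mult_le_0_iff)
  then show False using equilibrium_le_pbar[OF p] \<open>p \<noteq> pbar\<close>
    by (auto simp: vec_eq_iff less_eq_vec_def intro: antisym)
qed

lemma stable_equilibrium_iff_pbar: "stable_equilibrium F unit_cube p \<longleftrightarrow> p = pbar"
proof
  assume "stable_equilibrium F unit_cube p"
  then show "p = pbar" by (rule stable_equilibrium_eq_pbar)
next
  assume "p = pbar"
  then show "stable_equilibrium F unit_cube p"
    unfolding stable_equilibrium_def equilibrium_def
    using pbar_attractive pbar_lyapunov_stable pbar_in_unit_cube F_pbar by simp
qed

end

theorem proposition1:
  fixes lam del :: "real ^ 'n"
    and B :: "real ^ 'n ^ 'n"
    and q :: "'n \<Rightarrow> real \<Rightarrow> real"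
    and S :: "(real ^ 'n) set"
    and s :: "real ^ 'n"
  assumes N2: "CARD('n) \<ge> 2"
    and lam_nonneg: "\<forall>i. lam $ i \<ge> 0"
    and lam_pos_set: "{i. lam $ i > 0} \<noteq> {}" "{i. lam $ i > 0} \<noteq> UNIV"
    and del_pos: "\<forall>i. del $ i > 0"
    and B_nonneg: "\<forall>i j. B $ i $ j \<ge> 0"
    and B_diag: "\<forall>i. B $ i $ i = 0"
    and weak: "weakly_connected (infection_edges B)"
    and not_strong: "\<not> strongly_connected (infection_edges B)"
    and S_convex: "convex S"
    and S_nonneg: "S \<subseteq> {x. \<forall>i. x $ i \<ge> 0}"
    and q_range: "\<forall>i. \<forall>x\<ge>0. 0 < q i x \<and> q i x \<le> 1"
    and q_decr: "\<forall>i. \<forall>x y. 0 \<le> x \<and> x \<le> y \<longrightarrow> q i y \<le> q i x"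
    and q_strict_convex: "\<forall>i. strictly_convex_on {0..} (q i)"
    and q_C1: "\<forall>i. \<exists>q'. continuous_on {0..} q' \<and>
                 (\<forall>x\<ge>0. (q i has_real_derivative q' x) (at x within {0..}))"
    and s_in: "s \<in> S"
  shows "\<exists>pbar. (\<forall>p. stable_equilibrium (sis_field lam B del q s) unit_cube p \<longleftrightarrow> p = pbar)
           \<and> (\<forall>i. (1 - pbar $ i) * (lam $ i + (B *v pbar) $ i)
                   - inverse (q i (s $ i)) * del $ i * pbar $ i = 0)"
proof -
  have "0 \<le> s $ i" for i using S_nonneg s_in by auto
  then interpret sis_model lam del B q s
    using lam_nonneg del_pos B_nonneg q_range by unfold_locales auto
  have "(1 - pbar $ i) * (lam $ i + (B *v pbar) $ i) - inverse (q i (s $ i)) * del $ i * pbar $ i = 0" for i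
    using F_pbar q_pos[of i] by (simp add: vec_eq_iff F_nth field_simps)
  then show ?thesis using stable_equilibrium_iff_pbar by blast
qed

end
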